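(* Let $\mathcal{D}$ be a distribution over pairs $(x,y)$ with $x \in \mathbb{R}^n$ and $y \in [C]$, let $d(\cdot,\cdot)$ be an arbitrary metric on $\mathbb{R}^n$, and let $\epsilon > 0$. Let $f_{\mathrm{det}}: \mathbb{R}^n \to [C] \cup \{\bot\}$ be a detector with risk $R(f_{\mathrm{det}}) = \alpha$ and robust risk with detection $R^{\epsilon}_{\mathrm{adv\text{-}det}}(f_{\mathrm{det}}) = \beta$. Define a classifier $f_{\mathrm{clf}}$ on an input $\hat{x} \in \mathbb{R}^n$ as follows: if $f_{\mathrm{det}}(\hat{x}) \neq \bot$, output $f_{\mathrm{det}}(\hat{x})$; otherwise, if there exists $x'$ with $d(\hat{x}, x') \le \epsilon/2$ and $f_{\mathrm{det}}(x') \neq \bot$, output $f_{\mathrm{det}}(x')$ for such an $x'$; otherwise output a uniformly random label in $[C]$. Then $R(f_{\mathrm{clf}}) \le \alpha$ and $R^{\epsilon/2}_{\mathrm{adv}}(f_{\mathrm{clf}}) \le \beta$.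
   Context: A classifier is a function $f_{\mathrm{clf}}: \mathbb{R}^n \to [C]$; a detector is a function $f_{\mathrm{det}}: \mathbb{R}^n \to [C] \cup \{\bot\}$, where $\bot$ denotes rejection. For $f$ either a classifier or a detector, the risk is $R(f) = \mathbb{E}_{(x,y)\sim\mathcal{D}}[\mathbb{1}\{f(x) \neq y\}]$ (for a detector, outputting $\bot$ on a clean sample counts as an error). The robust risk of a classifier at distance $\epsilon$ is $R^{\epsilon}_{\mathrm{adv}}(f_{\mathrm{clf}}) = \mathbb{E}_{(x,y)\sim\mathcal{D}}[\max_{d(x,\hat{x}) \le \epsilon} \mathbb{1}\{f_{\mathrm{clf}}(\hat{x}) \neq y\}]$. The robust risk with detection of a detector at distance $\epsilon$ is $R^{\epsilon}_{\mathrm{adv\text{-}det}}(f_{\mathrm{det}}) = \mathbb{E}_{(x,y)\sim\mathcal{D}}[\max_{d(x,\hat{x}) \le \epsilon} \mathbb{1}\{f_{\mathrm{det}}(x) \neq y \ \lor\ f_{\mathrm{det}}(\hat{x}) \notin \{y, \bot\}\}]$. Detectors are assumed deterministic. The random label output by $f_{\mathrm{clf}}$ in the last case may be counted as an error in the risk bounds. *)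

theory Defs
  imports "HOL-Probability.Probability"
begin

(* Labels: nat, with [C] = {1..C}.
   Detector: 'x => nat option, None is the rejection symbol \<bottom>. *)

definition risk_clf :: "('x \<times> nat) measure \<Rightarrow> ('x \<Rightarrow> nat) \<Rightarrow> ennreal" where
  "risk_clf D f = (\<integral>\<^sup>+ z. indicator {(x, y). f x \<noteq> y} z \<partial>D)"

definition risk_det :: "('x \<times> nat) measure \<Rightarrow> ('x \<Rightarrow> nat option) \<Rightarrow> ennreal" where
  "risk_det D f = (\<integral>\<^sup>+ z. indicator {(x, y). f x \<noteq> Some y} z \<partial>D)"

definition adv_risk_clf ::
  "('x \<times> nat) measure \<Rightarrow> ('x \<Rightarrow> 'x \<Rightarrow> real) \<Rightarrow> real \<Rightarrow> ('x \<Rightarrow> nat) \<Rightarrow> ennreal" where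
  "adv_risk_clf D d eps f =
     (\<integral>\<^sup>+ z. indicator {(x, y). \<exists>xh. d x xh \<le> eps \<and> f xh \<noteq> y} z \<partial>D)"

definition adv_det_risk ::
  "('x \<times> nat) measure \<Rightarrow> ('x \<Rightarrow> 'x \<Rightarrow> real) \<Rightarrow> real \<Rightarrow> ('x \<Rightarrow> nat option) \<Rightarrow> ennreal" where
  "adv_det_risk D d eps f =
     (\<integral>\<^sup>+ z. indicator {(x, y). \<exists>xh. d x xh \<le> eps \<and>
                              (f x \<noteq> Some y \<or> f xh \<notin> {Some y, None})} z \<partial>D)"

(* The classifier built from the detector.  g is the choice of "such an x'";
   r is the realisation of the uniformly random label in [C]. *)
definition clf_of_det ::
  "('x \<Rightarrow> 'x \<Rightarrow> real) \<Rightarrow> real \<Rightarrow> ('x \<Rightarrow> nat option) \<Rightarrow> ('x \<Rightarrow> 'x) \<Rightarrow> nat \<Rightarrow> 'x \<Rightarrow> nat" where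
  "clf_of_det d eps f g r xh =
     (case f xh of
        Some c \<Rightarrow> c
      | None \<Rightarrow> (if \<exists>x'. d xh x' \<le> eps / 2 \<and> f x' \<noteq> None then the (f (g xh)) else r))"

end

(* Both bounds hold pointwise, before integrating against D.  On a clean
   input the classifier can only err where the detector does not output the
   true label.  If the classifier errs on some xh within eps/2 of x, then
   either the detector already errs on x, or it accepts xh with a wrong label,
   or it rejects xh; in the last case (with the detector correct on x) the
   point x itself shows that a replacement g xh exists, and g xh lies within
   eps/2 + eps/2 = eps of x and carries a wrong label.  Each case is a
   successful attack on the detector at radius eps. *)
theory Submission
  imports Defs
begin

lemma clf_of_det_accepted:
  "f xh = Some c \<Longrightarrow> clf_of_det d eps f g r xh = c"
  by (simp add: clf_of_det_def)

lemma det_error_if_clf_of_det_error: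
  "clf_of_det d eps f g r x \<noteq> y \<Longrightarrow> f x \<noteq> Some y"
  using clf_of_det_accepted by metis

lemma det_adv_error_if_clf_of_det_adv_error:
  assumes metric: "Metric_space UNIV d"
    and g_choice: "\<And>xh. (\<exists>x'. d xh x' \<le> eps / 2 \<and> f x' \<noteq> None) \<Longrightarrow>
                        d xh (g xh) \<le> eps / 2 \<and> f (g xh) \<noteq> None"
    and close: "d x xh \<le> eps / 2"
    and wrong: "clf_of_det d eps f g r xh \<noteq> y"
  shows "\<exists>xh'. d x xh' \<le> eps \<and> (f x \<noteq> Some y \<or> f xh' \<notin> {Some y, None})"
proof -
  have "d x xh \<le> eps"
    using close Metric_space.nonneg[OF metric, of x xh] by linarith
  show ?thesis
  proof (cases "f xh = None \<and> f x = Some y")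
    case False
    then have "f x \<noteq> Some y \<or> f xh \<notin> {Some y, None}"
      using wrong by (cases "f xh") (auto simp: clf_of_det_def)
    with \<open>d x xh \<le> eps\<close> show ?thesis by blast
  next
    case True
    have witness: "\<exists>x'. d xh x' \<le> eps / 2 \<and> f x' \<noteq> None"
      using True close Metric_space.commute[OF metric, of x xh] by auto
    with g_choice have g_close: "d xh (g xh) \<le> eps / 2" and g_accepts: "f (g xh) \<noteq> None"
      by auto
    have "d x (g xh) \<le> eps"
      using Metric_space.triangle[OF metric, of x xh "g xh"] close g_close by simp
    moreover have "clf_of_det d eps f g r xh = the (f (g xh))"
      using True witness by (simp add: clf_of_det_def)
    with wrong g_accepts have "f (g xh) \<notin> {Some y, None}"
      by auto
    ultimately show ?thesis by blast
  qed
qed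

lemma risk_clf_of_det_le: "risk_clf D (clf_of_det d eps f g r) \<le> risk_det D f"
  unfolding risk_clf_def risk_det_def
  by (intro nn_integral_mono indicator_leI) (auto dest: det_error_if_clf_of_det_error)

lemma adv_risk_clf_of_det_le:
  assumes "Metric_space UNIV d"
    and "\<And>xh. (\<exists>x'. d xh x' \<le> eps / 2 \<and> f x' \<noteq> None) \<Longrightarrow>
               d xh (g xh) \<le> eps / 2 \<and> f (g xh) \<noteq> None"
  shows "adv_risk_clf D d (eps / 2) (clf_of_det d eps f g r) \<le> adv_det_risk D d eps f"
  unfolding adv_risk_clf_def adv_det_risk_def
  by (intro nn_integral_mono indicator_leI)
    (use det_adv_error_if_clf_of_det_adv_error[OF assms] in blast)

(* The bounds are pointwise. *)
theorem theorem1: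
  fixes D :: "((real ^ ('n::finite)) \<times> nat) measure"
    and d :: "real ^ 'n \<Rightarrow> real ^ 'n \<Rightarrow> real"
    and C :: nat and eps :: real and alpha beta :: ennreal
    and f_det :: "real ^ 'n \<Rightarrow> nat option"
    and g :: "real ^ 'n \<Rightarrow> real ^ 'n"
  assumes "prob_space D"
    and "AE z in D. snd z \<in> {1..C}"
    and "C \<ge> 1"
    and "Metric_space UNIV d"
    and "eps > 0"
    and "\<And>x. f_det x \<in> Some ` {1..C} \<union> {None}"
    and "\<And>xh. (\<exists>x'. d xh x' \<le> eps / 2 \<and> f_det x' \<noteq> None) \<Longrightarrow>
               d xh (g xh) \<le> eps / 2 \<and> f_det (g xh) \<noteq> None"
    and "risk_det D f_det = alpha"
    and "adv_det_risk D d eps f_det = beta"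
  shows "\<forall>r \<in> {1..C}.
           risk_clf D (clf_of_det d eps f_det g r) \<le> alpha \<and>
           adv_risk_clf D d (eps / 2) (clf_of_det d eps f_det g r) \<le> beta"
  using risk_clf_of_det_le adv_risk_clf_of_det_le[OF assms(4,7)] assms(8,9) by blast

end
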